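(* For every integer $k\ge 1$, the complete multipartite graph $K_{1*k,2*(k-1)}$ (with $k$ parts of size $1$ and $k-1$ parts of size $2$) has m-number $m(K_{1*k,2*(k-1)})=k+1$.
   Context: All graphs are finite, simple and undirected. A list assignment $L$ for a graph $G$ assigns to each vertex $v$ a set $L(v)$ of colors; an $L$-coloring is a proper vertex coloring $c$ of $G$ with $c(v)\in L(v)$ for every vertex $v$. A $k$-list assignment is a list assignment with $|L(v)|=k$ for all $v$. $G$ is uniquely $k$-list colorable (U$k$LC) if there exists a $k$-list assignment $L$ such that $G$ has exactly one $L$-coloring. $G$ has property $M(k)$ if it is not U$k$LC, i.e. for every $k$-list assignment $L$, $G$ has either no $L$-coloring or at least two $L$-colorings. The m-number $m(G)$ is the least integer $k\ge 1$ such that $G$ has property $M(k)$. (Every U$k$LC graph is also U$(k-1)$LC, so $G$ is U$k$LC iff $k<m(G)$.) *)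

theory Defs
  imports Main
begin

text \<open>A graph is given by a finite vertex set V and a symmetric irreflexive
  adjacency relation E. Colors are natural numbers.\<close>

definition is_L_coloring :: "'a set \<Rightarrow> ('a \<Rightarrow> 'a \<Rightarrow> bool) \<Rightarrow> ('a \<Rightarrow> nat set) \<Rightarrow> ('a \<Rightarrow> nat) \<Rightarrow> bool" where
  "is_L_coloring V E L c \<longleftrightarrow>
     (\<forall>v\<in>V. c v \<in> L v) \<and> (\<forall>u\<in>V. \<forall>v\<in>V. E u v \<longrightarrow> c u \<noteq> c v)"

definition L_colorings :: "'a set \<Rightarrow> ('a \<Rightarrow> 'a \<Rightarrow> bool) \<Rightarrow> ('a \<Rightarrow> nat set) \<Rightarrow> ('a \<Rightarrow> nat) set" where
  "L_colorings V E L = {c. is_L_coloring V E L c \<and> (\<forall>v. v \<notin> V \<longrightarrow> c v = undefined)}"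

definition uniquely_k_list_colorable :: "'a set \<Rightarrow> ('a \<Rightarrow> 'a \<Rightarrow> bool) \<Rightarrow> nat \<Rightarrow> bool" where
  "uniquely_k_list_colorable V E k \<longleftrightarrow>
     (\<exists>L. (\<forall>v\<in>V. card (L v) = k) \<and> card (L_colorings V E L) = 1)"

definition has_M :: "'a set \<Rightarrow> ('a \<Rightarrow> 'a \<Rightarrow> bool) \<Rightarrow> nat \<Rightarrow> bool" where
  "has_M V E k \<longleftrightarrow> \<not> uniquely_k_list_colorable V E k"

definition m_number :: "'a set \<Rightarrow> ('a \<Rightarrow> 'a \<Rightarrow> bool) \<Rightarrow> nat" where
  "m_number V E = (LEAST k. k \<ge> 1 \<and> has_M V E k)"

text \<open>Complete multipartite graph with part sizes given by a list s:
  vertex (i,j) is the j-th vertex of part i.\<close>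
definition cmp_V :: "nat list \<Rightarrow> (nat \<times> nat) set" where
  "cmp_V s = {(i,j). i < length s \<and> j < s ! i}"

definition cmp_E :: "(nat \<times> nat) \<Rightarrow> (nat \<times> nat) \<Rightarrow> bool" where
  "cmp_E x y \<longleftrightarrow> fst x \<noteq> fst y"

definition K_parts :: "nat \<Rightarrow> nat list" where
  "K_parts k = replicate k 1 @ replicate (k - 1) 2"

end

(* If c were the only L-coloring for lists of size k + 1, every color of a list L v would be used by
   c, since otherwise v could be recolored. Only the k - 1 parts of size two can carry a color used
   twice, so L v - {c v}, of size k, contains the color of a uniquely colored vertex w other than v.
   Iterating v |-> w among the uniquely colored vertices ends in a cycle, and rotating the colors
   along it gives a second L-coloring. Conversely, suitable lists of size k force the coloring that
   gives part i the color i, and shrinking every list around the color of a unique coloring passes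
   unique list colorability from j + 1 down to j. *)

theory Submission
  imports Defs
begin

lemma uniquely_k_list_colorable_iff:
  "uniquely_k_list_colorable V E k \<longleftrightarrow>
     (\<exists>L c. (\<forall>v\<in>V. card (L v) = k) \<and> L_colorings V E L = {c})"
  by (simp add: uniquely_k_list_colorable_def card_1_singleton_iff)

lemma L_coloring_in_list: "c \<in> L_colorings V E L \<Longrightarrow> v \<in> V \<Longrightarrow> c v \<in> L v"
  by (simp add: L_colorings_def is_L_coloring_def)

lemma L_coloring_proper:
  "c \<in> L_colorings V E L \<Longrightarrow> u \<in> V \<Longrightarrow> w \<in> V \<Longrightarrow> E u w \<Longrightarrow> c u \<noteq> c w"
  by (simp add: L_colorings_def is_L_coloring_def)

lemma L_colorings_mono:
  "(\<And>v. v \<in> V \<Longrightarrow> L' v \<subseteq> L v) \<Longrightarrow> L_colorings V E L' \<subseteq> L_colorings V E L"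
  by (auto simp: L_colorings_def is_L_coloring_def)

lemma uniquely_k_list_colorable_Suc_imp:
  assumes "uniquely_k_list_colorable V E (Suc j)" "1 \<le> j"
  shows "uniquely_k_list_colorable V E j"
proof -
  obtain L c where L: "\<forall>v\<in>V. card (L v) = Suc j" and c: "L_colorings V E L = {c}"
    using assms(1) by (auto simp: uniquely_k_list_colorable_iff)
  have "\<exists>S. c v \<in> S \<and> S \<subseteq> L v \<and> card S = j" if v: "v \<in> V" for v
  proof -
    have fin: "finite (L v)" using L v card.infinite by fastforce
    have cv: "c v \<in> L v" using c v by (metis L_coloring_in_list singletonI)
    then have "card (L v - {c v}) = j" using L v by simp
    then obtain S where S: "S \<subseteq> L v - {c v}" "card S = j - 1"
      by (meson diff_le_self obtain_subset_with_card_n)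
    moreover have "finite S" "c v \<notin> S" using S(1) fin by (auto intro: finite_subset)
    ultimately have "card (insert (c v) S) = j" using assms(2) by simp
    then show ?thesis using S cv by blast
  qed
  then obtain L' where L': "\<forall>v\<in>V. c v \<in> L' v \<and> L' v \<subseteq> L v \<and> card (L' v) = j"
    by metis
  have "c \<in> L_colorings V E L'"
    using c L' by (auto simp: L_colorings_def is_L_coloring_def)
  moreover have "L_colorings V E L' \<subseteq> {c}"
    using L_colorings_mono[of V L' L E] L' c by blast
  ultimately have "L_colorings V E L' = {c}" by blast
  then show ?thesis using L' by (auto simp: uniquely_k_list_colorable_iff)
qed

lemma uniquely_k_list_colorable_mono:
  assumes "uniquely_k_list_colorable V E k" "1 \<le> j" "j \<le> k"
  shows "uniquely_k_list_colorable V E j"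
  using assms(3,1)
proof (induction rule: inc_induct)
  case (step n)
  then show ?case using assms(2) by (meson order_trans uniquely_k_list_colorable_Suc_imp)
qed

lemma m_number_eqI:
  assumes "uniquely_k_list_colorable V E k" "has_M V E (k + 1)"
  shows "m_number V E = k + 1"
  unfolding m_number_def
proof (rule Least_equality)
  show "1 \<le> k + 1 \<and> has_M V E (k + 1)" using assms(2) by simp
next
  fix j assume "1 \<le> j \<and> has_M V E j"
  then show "k + 1 \<le> j"
    using uniquely_k_list_colorable_mono[OF assms(1)] unfolding has_M_def by fastforce
qed

definition uniquely_colored :: "'a set \<Rightarrow> ('a \<Rightarrow> nat) \<Rightarrow> 'a set" where
  "uniquely_colored V c = {v \<in> V. \<forall>w\<in>V. w \<noteq> v \<longrightarrow> c w \<noteq> c v}"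

lemma L_colorings_eq_singleton_imp_list_subset:
  assumes c: "L_colorings V E L = {c}" and v: "v \<in> V"
  shows "L v \<subseteq> c ` V"
proof
  fix x assume x: "x \<in> L v"
  show "x \<in> c ` V"
  proof (rule ccontr)
    assume unused: "x \<notin> c ` V"
    have "c \<in> L_colorings V E L" using c by simp
    then have "c(v := x) \<in> L_colorings V E L"
      using x v unused by (auto simp: L_colorings_def is_L_coloring_def)
    then have "c(v := x) = c" using c by blast
    then show False using unused v by (metis fun_upd_same imageI)
  qed
qed

lemma finite_self_map_has_invariant_subset:
  assumes "finite N" "N \<noteq> {}" "f ` N \<subseteq> N"
  shows "\<exists>C\<subseteq>N. C \<noteq> {} \<and> f ` C = C"
proof -
  let ?closed = "\<lambda>n. \<exists>C\<subseteq>N. C \<noteq> {} \<and> f ` C \<subseteq> C \<and> card C = n"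
  have "?closed (card N)" using assms by blast
  then have "?closed (LEAST n. ?closed n)" by (rule LeastI)
  then obtain C where C: "C \<subseteq> N" "C \<noteq> {}" "f ` C \<subseteq> C" "card C = (LEAST n. ?closed n)"
    by blast
  have "?closed (card (f ` C))" using C by (intro exI[of _ "f ` C"]) auto
  then have "card C \<le> card (f ` C)" using C(4) by (simp add: Least_le)
  then have "f ` C = C" using C(1,3) assms(1) by (meson card_seteq finite_subset)
  then show ?thesis using C by blast
qed

text \<open>Permuting colors among uniquely colored vertices creates no conflict, since their colors occur
  nowhere else.\<close>

lemma exists_other_L_coloring_by_rotation:
  assumes c: "c \<in> L_colorings V E L" and C: "C \<subseteq> uniquely_colored V c" "finite C" "C \<noteq> {}"
    and f: "f ` C = C" "\<forall>v\<in>C. f v \<noteq> v \<and> c (f v) \<in> L v"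
  shows "\<exists>c'\<in>L_colorings V E L. c' \<noteq> c"
proof -
  define p where "p x = (if x \<in> C then f x else x)" for x
  have CV: "C \<subseteq> V" using C(1) by (auto simp: uniquely_colored_def)
  have C_unique: "c y \<noteq> c x" if "x \<in> C" "y \<in> V" "y \<noteq> x" for x y
    using that C(1) by (auto simp: uniquely_colored_def)
  have pC: "p x \<in> C \<longleftrightarrow> x \<in> C" for x using f(1) by (auto simp: p_def)
  have pV: "p x \<in> V" if "x \<in> V" for x using that CV f(1) by (auto simp: p_def)
  have "inj_on f C" using f(1) C(2) by (simp add: eq_card_imp_inj_on)
  then have p_inj: "inj p" using f(1) by (auto simp: p_def inj_on_def split: if_splits)
  have rotated: "c \<circ> p \<in> L_colorings V E L"
    unfolding L_colorings_def is_L_coloring_def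
  proof (intro CollectI conjI ballI allI impI)
    fix v assume "v \<in> V" then show "(c \<circ> p) v \<in> L v"
      using f(2) c by (auto simp: p_def L_coloring_in_list)
  next
    fix v assume "v \<notin> V" then show "(c \<circ> p) v = undefined"
      using c CV by (auto simp: p_def L_colorings_def)
  next
    fix u w assume uw: "u \<in> V" "w \<in> V" "E u w"
    have "u \<noteq> w" using L_coloring_proper[OF c uw] by blast
    then have "p u \<noteq> p w" using p_inj by (meson injD)
    show "(c \<circ> p) u \<noteq> (c \<circ> p) w"
    proof (cases "u \<in> C \<or> w \<in> C")
      case True
      then have "p u \<in> C \<or> p w \<in> C" using pC by blast
      then show ?thesis
        using C_unique[of "p u" "p w"] C_unique[of "p w" "p u"] \<open>p u \<noteq> p w\<close> pV uw(1,2) by auto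
    next
      case False
      then show ?thesis using L_coloring_proper[OF c uw] by (simp add: p_def)
    qed
  qed
  moreover obtain v where v: "v \<in> C" using C(3) by blast
  moreover have "f v \<in> V" using v f(1) CV by blast
  ultimately have "c (p v) \<noteq> c v" using C_unique[of v "f v"] f(2) by (simp add: p_def)
  then show ?thesis using rotated by (metis comp_apply)
qed

lemma has_M_if_few_repeated_colors:
  assumes "finite V" "V \<noteq> {}"
    and few: "\<And>c. (\<And>u w. u \<in> V \<Longrightarrow> w \<in> V \<Longrightarrow> E u w \<Longrightarrow> c u \<noteq> c w) \<Longrightarrow>
                card (c ` (V - uniquely_colored V c)) + 1 < k"
  shows "has_M V E k"
  unfolding has_M_def uniquely_k_list_colorable_iff
proof
  assume "\<exists>L c. (\<forall>v\<in>V. card (L v) = k) \<and> L_colorings V E L = {c}"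
  then obtain L c where L: "\<forall>v\<in>V. card (L v) = k" and c: "L_colorings V E L = {c}" by blast
  let ?N = "uniquely_colored V c"
  have c_col: "c \<in> L_colorings V E L" using c by simp
  have few_c: "card (c ` (V - ?N)) + 1 < k"
    using few[of c] L_coloring_proper[OF c_col] by blast
  have next_vertex: "\<exists>w\<in>?N. w \<noteq> v \<and> c w \<in> L v" if v: "v \<in> V" for v
  proof -
    have card_L: "card (L v - {c v}) = k - 1"
      using L v L_coloring_in_list[OF c_col v] by (simp add: card_Diff_singleton_if)
    have "\<not> L v - {c v} \<subseteq> c ` (V - ?N)"
    proof
      assume "L v - {c v} \<subseteq> c ` (V - ?N)"
      then have "card (L v - {c v}) \<le> card (c ` (V - ?N))" using assms(1) by (intro card_mono) auto
      then show False using card_L few_c by linarith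
    qed
    then obtain x where x: "x \<in> L v" "x \<noteq> c v" "x \<notin> c ` (V - ?N)" by blast
    obtain w where w: "w \<in> V" "x = c w"
      using L_colorings_eq_singleton_imp_list_subset[OF c v] x(1) by blast
    have "w \<in> ?N" using w x(3) by (metis DiffI image_eqI)
    moreover have "w \<noteq> v" using w x(2) by blast
    ultimately show ?thesis using w x(1) by blast
  qed
  obtain f where f: "\<forall>v\<in>V. f v \<in> ?N \<and> f v \<noteq> v \<and> c (f v) \<in> L v"
    using bchoice[of V "\<lambda>v w. w \<in> ?N \<and> w \<noteq> v \<and> c w \<in> L v"] next_vertex by blast
  have NV: "?N \<subseteq> V" by (auto simp: uniquely_colored_def)
  then have fin_N: "finite ?N" using assms(1) by (rule finite_subset)
  have N_nonempty: "?N \<noteq> {}" using assms(2) f by blast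
  have f_N: "f ` ?N \<subseteq> ?N" using f NV by blast
  obtain C where C: "C \<subseteq> ?N" "C \<noteq> {}" "f ` C = C"
    using finite_self_map_has_invariant_subset[OF fin_N N_nonempty f_N] by meson
  have "finite C" using C(1) fin_N by (rule finite_subset)
  moreover have "\<forall>v\<in>C. f v \<noteq> v \<and> c (f v) \<in> L v" using f C(1) NV by blast
  ultimately have "\<exists>c'\<in>L_colorings V E L. c' \<noteq> c"
    using exists_other_L_coloring_by_rotation[OF c_col C(1) _ C(2,3)] by meson
  then show False using c by simp
qed

lemma mem_cmp_V_K_parts:
  "(i, j) \<in> cmp_V (K_parts k) \<longleftrightarrow> i < k \<and> j = 0 \<or> k \<le> i \<and> i < 2 * k - 1 \<and> j < 2"
  by (auto simp: cmp_V_def K_parts_def nth_append)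

lemma finite_cmp_V: "finite (cmp_V s)"
proof -
  have "cmp_V s = (SIGMA i:{..<length s}. {..<s ! i})" by (auto simp: cmp_V_def)
  then show ?thesis by simp
qed

lemma card_repeated_colors_K_parts:
  assumes proper: "\<And>u w. u \<in> cmp_V (K_parts k) \<Longrightarrow> w \<in> cmp_V (K_parts k) \<Longrightarrow>
                     cmp_E u w \<Longrightarrow> c u \<noteq> c w"
  shows "card (c ` (cmp_V (K_parts k) - uniquely_colored (cmp_V (K_parts k)) c)) \<le> k - 1"
proof -
  let ?V = "cmp_V (K_parts k)"
  have "c ` (?V - uniquely_colored ?V c) \<subseteq> (\<lambda>i. c (i, 0)) ` {k..<2 * k - 1}"
  proof
    fix x assume "x \<in> c ` (?V - uniquely_colored ?V c)"
    then obtain i j j' where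
      "(i, j) \<in> ?V" "(i, j') \<in> ?V" "j \<noteq> j'" "c (i, j) = x" "c (i, j') = x"
      using proper by (force simp: uniquely_colored_def cmp_E_def)
    then have "k \<le> i \<and> i < 2 * k - 1 \<and> x = c (i, 0)"
      by (cases j; cases j') (auto simp: mem_cmp_V_K_parts)
    then show "x \<in> (\<lambda>i. c (i, 0)) ` {k..<2 * k - 1}" by auto
  qed
  then have "card (c ` (?V - uniquely_colored ?V c)) \<le> card ((\<lambda>i. c (i, 0)) ` {k..<2 * k - 1})"
    by (intro card_mono) auto
  also have "\<dots> \<le> k - 1" using card_image_le[of "{k..<2 * k - 1}"] by simp
  finally show ?thesis .
qed

lemma K_parts_has_M:
  assumes "1 \<le> k"
  shows "has_M (cmp_V (K_parts k)) cmp_E (k + 1)"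
proof (rule has_M_if_few_repeated_colors)
  show "finite (cmp_V (K_parts k))" by (rule finite_cmp_V)
  show "cmp_V (K_parts k) \<noteq> {}" using assms mem_cmp_V_K_parts[of 0 0 k] by auto
  fix c :: "nat \<times> nat \<Rightarrow> nat"
  assume "\<And>u w. u \<in> cmp_V (K_parts k) \<Longrightarrow> w \<in> cmp_V (K_parts k) \<Longrightarrow>
            cmp_E u w \<Longrightarrow> c u \<noteq> c w"
  then have "card (c ` (cmp_V (K_parts k) - uniquely_colored (cmp_V (K_parts k)) c)) \<le> k - 1"
    by (rule card_repeated_colors_K_parts)
  then show "card (c ` (cmp_V (K_parts k) - uniquely_colored (cmp_V (K_parts k)) c)) + 1 < k + 1"
    using assms by linarith
qed

lemma inj_on_decreasing_imp_id:
  fixes g :: "nat \<Rightarrow> nat"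
  assumes inj: "inj_on g {..<n}" and le: "\<And>i. i < n \<Longrightarrow> g i \<le> i" and "i < n"
  shows "g i = i"
  using \<open>i < n\<close>
proof (induction i rule: less_induct)
  case (less i)
  show ?case
  proof (rule ccontr)
    assume "g i \<noteq> i"
    then have "g i < i" using le[OF less.prems] by simp
    then have "g (g i) = g i" using less by simp
    then have "g i = i" using inj less.prems \<open>g i < i\<close> by (auto dest: inj_onD)
    with \<open>g i \<noteq> i\<close> show False ..
  qed
qed

text \<open>Part i is to receive color i. The first vertices of the 2k - 1 parts are colored injectively
  inside the colors below 2k - 1, hence bijectively, so the second vertex of a 2-part repeats the
  color of the first; the two lists of a 2-part i meet only in i. A single part i < k is then left
  with colors at most i only, and injectivity forces color i.\<close>

definition K_lists :: "nat \<Rightarrow> nat \<times> nat \<Rightarrow> nat set" where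
  "K_lists k = (\<lambda>(i, j).
     if i < k then {0..i} \<union> {k + i..2 * k - 2}
     else if j = 0 then {i + 1 - k..i}
     else insert i ({0..i - k} \<union> {i + 1..2 * k - 2}))"

lemma card_K_lists:
  assumes "(i, j) \<in> cmp_V (K_parts k)"
  shows "card (K_lists k (i, j)) = k"
proof -
  consider "i < k" | "k \<le> i" "i < 2 * k - 1" "j = 0" | "k \<le> i" "i < 2 * k - 1" "j = 1"
    using assms by (force simp: mem_cmp_V_K_parts)
  then show ?thesis
  proof cases
    case 1
    then have "card ({0..i} \<union> {k + i..2 * k - 2}) = card {0..i} + card {k + i..2 * k - 2}"
      by (intro card_Un_disjoint) auto
    with 1 show ?thesis by (simp add: K_lists_def)
  next
    case 2
    then show ?thesis by (simp add: K_lists_def)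
  next
    case 3
    then have "card ({0..i - k} \<union> {i + 1..2 * k - 2}) = card {0..i - k} + card {i + 1..2 * k - 2}"
      by (intro card_Un_disjoint) auto
    with 3 show ?thesis by (simp add: K_lists_def)
  qed
qed

lemma K_lists_subset:
  "(i, j) \<in> cmp_V (K_parts k) \<Longrightarrow> K_lists k (i, j) \<subseteq> {..<2 * k - 1}"
  by (auto simp: mem_cmp_V_K_parts K_lists_def)

lemma K_lists_pair_Int:
  "1 \<le> k \<Longrightarrow> k \<le> i \<Longrightarrow> K_lists k (i, 0) \<inter> K_lists k (i, 1) = {i}"
  by (auto simp: K_lists_def)

lemma K_lists_coloring_first_vertices_onto:
  assumes d: "d \<in> L_colorings (cmp_V (K_parts k)) cmp_E (K_lists k)" and x: "x < 2 * k - 1"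
  shows "\<exists>i<2 * k - 1. d (i, 0) = x"
proof -
  let ?n = "2 * k - 1"
  have col_V: "(i, 0) \<in> cmp_V (K_parts k)" if "i < ?n" for i
    using that by (auto simp: mem_cmp_V_K_parts)
  have inj: "inj_on (\<lambda>i. d (i, 0)) {..<?n}"
  proof (rule inj_onI)
    fix a b assume "a \<in> {..<?n}" "b \<in> {..<?n}" "d (a, 0) = d (b, 0)"
    then show "a = b" using L_coloring_proper[OF d col_V col_V, of a b] by (auto simp: cmp_E_def)
  qed
  have "d (i, 0) < ?n" if "i < ?n" for i
    using L_coloring_in_list[OF d col_V[OF that]] K_lists_subset[OF col_V[OF that]] by auto
  then have "(\<lambda>i. d (i, 0)) ` {..<?n} \<subseteq> {..<?n}" by auto
  with inj have "(\<lambda>i. d (i, 0)) ` {..<?n} = {..<?n}" by (simp add: endo_inj_surj)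
  then have "x \<in> (\<lambda>i. d (i, 0)) ` {..<?n}" using x by simp
  then show ?thesis by auto
qed

lemma K_lists_coloring_pair:
  assumes d: "d \<in> L_colorings (cmp_V (K_parts k)) cmp_E (K_lists k)"
    and i: "k \<le> i" "i < 2 * k - 1"
  shows "d (i, 0) = i" "d (i, 1) = i"
proof -
  let ?V = "cmp_V (K_parts k)"
  have V: "(i, 0) \<in> ?V" "(i, 1) \<in> ?V" using i by (auto simp: mem_cmp_V_K_parts)
  have "d (i, 1) < 2 * k - 1" using L_coloring_in_list[OF d V(2)] K_lists_subset[OF V(2)] by auto
  then obtain i' where i': "i' < 2 * k - 1" "d (i', 0) = d (i, 1)"
    using K_lists_coloring_first_vertices_onto[OF d] by blast
  then have "(i', 0) \<in> ?V" by (auto simp: mem_cmp_V_K_parts)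
  have "i' = i"
  proof (rule ccontr)
    assume "i' \<noteq> i"
    then have "cmp_E (i', 0) (i, 1)" by (simp add: cmp_E_def)
    then show False using L_coloring_proper[OF d \<open>(i', 0) \<in> ?V\<close> V(2)] i'(2) by simp
  qed
  then have "d (i, 0) = d (i, 1)" using i' by simp
  moreover have "d (i, 0) \<in> K_lists k (i, 0)" "d (i, 1) \<in> K_lists k (i, 1)"
    using L_coloring_in_list[OF d] V by auto
  moreover have "1 \<le> k" using i by simp
  ultimately have "d (i, 0) \<in> {i}" "d (i, 1) \<in> {i}" using K_lists_pair_Int[of k i] i(1) by auto
  then show "d (i, 0) = i" "d (i, 1) = i" by auto
qed

lemma K_lists_coloring_single:
  assumes d: "d \<in> L_colorings (cmp_V (K_parts k)) cmp_E (K_lists k)" and "i < k"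
  shows "d (i, 0) = i"
proof (rule inj_on_decreasing_imp_id[where g = "\<lambda>i. d (i, 0)" and n = k])
  have col_V: "(i, 0) \<in> cmp_V (K_parts k)" if "i < k" for i
    using that by (auto simp: mem_cmp_V_K_parts)
  show "inj_on (\<lambda>i. d (i, 0)) {..<k}"
    using L_coloring_proper[OF d col_V col_V] by (auto simp: inj_on_def cmp_E_def)
  show "d (i, 0) \<le> i" if i: "i < k" for i
  proof (rule ccontr)
    assume "\<not> d (i, 0) \<le> i"
    then have "k \<le> d (i, 0)" "d (i, 0) < 2 * k - 1"
      using L_coloring_in_list[OF d col_V[OF i]] i by (auto simp: K_lists_def)
    then have "d (d (i, 0), 0) = d (i, 0)" using K_lists_coloring_pair[OF d] by blast
    moreover have "(d (i, 0), 0) \<in> cmp_V (K_parts k)"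
      using \<open>k \<le> d (i, 0)\<close> \<open>d (i, 0) < 2 * k - 1\<close> by (auto simp: mem_cmp_V_K_parts)
    ultimately show False
      using L_coloring_proper[OF d col_V[OF i]] i \<open>k \<le> d (i, 0)\<close> by (force simp: cmp_E_def)
  qed
qed (use assms in auto)

lemma L_colorings_K_lists:
  "L_colorings (cmp_V (K_parts k)) cmp_E (K_lists k) =
           {\<lambda>v. if v \<in> cmp_V (K_parts k) then fst v else undefined}"
  (is "?C = {?c}")
proof
  show "{?c} \<subseteq> ?C"
    by (auto simp: L_colorings_def is_L_coloring_def cmp_E_def mem_cmp_V_K_parts K_lists_def)
  show "?C \<subseteq> {?c}"
  proof
    fix d assume d: "d \<in> ?C"
    have "d (i, j) = i" if "(i, j) \<in> cmp_V (K_parts k)" for i j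
      using that K_lists_coloring_single[OF d] K_lists_coloring_pair[OF d]
      by (auto simp: mem_cmp_V_K_parts less_2_cases_iff)
    moreover have "d v = undefined" if "v \<notin> cmp_V (K_parts k)" for v
      using d that unfolding L_colorings_def by blast
    ultimately show "d \<in> {?c}" by fastforce
  qed
qed

lemma K_parts_uniquely_colorable: "uniquely_k_list_colorable (cmp_V (K_parts k)) cmp_E k"
  unfolding uniquely_k_list_colorable_iff using card_K_lists L_colorings_K_lists by fast

theorem mainTheorem15:
  fixes k :: nat
  assumes "k \<ge> 1"
  shows "m_number (cmp_V (K_parts k)) cmp_E = k + 1"
  using K_parts_uniquely_colorable K_parts_has_M[OF assms] by (rule m_number_eqI)

end
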